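(* Let $k\ge 2$ be an integer and let $F$ be a graph with chromatic number $\chi(F)=k+1$. For every $\varepsilon>0$ there exists $n_0$ such that every $F$-free graph $G$ on $n\ge n_0$ vertices satisfies \[ \sum_{v\in V(G)} d^2(v)\le \left(1-\frac{1}{k}+\varepsilon\right)^2 n^3. \]
   Context: All graphs are finite and simple; $d(v)$ denotes the degree of $v$. A graph is $F$-free if it contains no subgraph isomorphic to $F$. *)

theory Defs
  imports Complex_Main
begin

definition simple_graph :: "'a set \<Rightarrow> ('a \<Rightarrow> 'a \<Rightarrow> bool) \<Rightarrow> bool" where
  "simple_graph V E \<longleftrightarrow> finite V \<and> (\<forall>u v. E u v \<longrightarrow> u \<in> V \<and> v \<in> V)
     \<and> (\<forall>u v. E u v \<longrightarrow> E v u) \<and> (\<forall>v. \<not> E v v)"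

definition degree :: "'a set \<Rightarrow> ('a \<Rightarrow> 'a \<Rightarrow> bool) \<Rightarrow> 'a \<Rightarrow> nat" where
  "degree V E v = card {u \<in> V. E v u}"

definition proper_colouring :: "'a set \<Rightarrow> ('a \<Rightarrow> 'a \<Rightarrow> bool) \<Rightarrow> nat \<Rightarrow> ('a \<Rightarrow> nat) \<Rightarrow> bool" where
  "proper_colouring V E k c \<longleftrightarrow> (\<forall>v\<in>V. c v < k) \<and> (\<forall>u\<in>V. \<forall>v\<in>V. E u v \<longrightarrow> c u \<noteq> c v)"

definition colourable :: "'a set \<Rightarrow> ('a \<Rightarrow> 'a \<Rightarrow> bool) \<Rightarrow> nat \<Rightarrow> bool" where
  "colourable V E k \<longleftrightarrow> (\<exists>c. proper_colouring V E k c)"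

definition chromatic_number :: "'a set \<Rightarrow> ('a \<Rightarrow> 'a \<Rightarrow> bool) \<Rightarrow> nat" where
  "chromatic_number V E = (LEAST k. colourable V E k)"

definition contains_subgraph ::
  "'a set \<Rightarrow> ('a \<Rightarrow> 'a \<Rightarrow> bool) \<Rightarrow> 'b set \<Rightarrow> ('b \<Rightarrow> 'b \<Rightarrow> bool) \<Rightarrow> bool" where
  "contains_subgraph VF EF VG EG \<longleftrightarrow> (\<exists>f. inj_on f VF \<and> f ` VF \<subseteq> VG \<and>
      (\<forall>u\<in>VF. \<forall>v\<in>VF. EF u v \<longrightarrow> EG (f u) (f v)))"

definition free :: "'a set \<Rightarrow> ('a \<Rightarrow> 'a \<Rightarrow> bool) \<Rightarrow> 'b set \<Rightarrow> ('b \<Rightarrow> 'b \<Rightarrow> bool) \<Rightarrow> bool" where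
  "free VF EF VG EG \<longleftrightarrow> \<not> contains_subgraph VF EF VG EG"

end

theory Submission
  imports Defs "HOL-Library.FuncSet" "HOL-Analysis.Convex"
begin

(* If the degrees of G satisfy sum d(v)^2 > (1 - 1/k + eps)^2 n^3, their quadratic mean mu
   exceeds (1 - 1/k + eps) n. Testing the adjacency form on p = 1 + d/mu and q = 1 - d/mu, whose
   forms differ by 4 mu n while |p|^2 + |q|^2 = 4 n, gives a nonnegative weighting x of the vertices,
   bounded by 3, with x^T A x >= (1 - 1/k + eps/2) (sum x)^2 and sum x of order n; so for large n
   no vertex carries more than a tiny share of the total weight. A weighted Erdos-Stone theorem
   then finds the complete (k+1)-partite graph with parts of size |V(F)| in G, and this graph
   contains the (k+1)-colourable F.

   The weighted Erdos-Stone theorem is reduced to a minimum-degree version by deleting vertices of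
   small weighted degree, which does not decrease x^T A x - beta (sum x)^2 - c sum x. The
   minimum-degree version is proved by induction on k: given a large K_k(T), many heavy vertices
   have t neighbours in every part, and pigeonholing these neighbourhoods yields K_(k+1)(t). *)

section \<open>Colourings and complete partite subgraphs\<close>

lemma simple_graphD:
  assumes "simple_graph V E"
  shows "finite V" "symp E" "irreflp E"
  using assms unfolding simple_graph_def symp_def irreflp_def by auto

lemma colourable_card:
  assumes "simple_graph V E"
  shows "colourable V E (card V)"
proof -
  have fin: "finite V" and irrefl: "\<And>v. \<not> E v v" using assms unfolding simple_graph_def by auto
  obtain h where h: "bij_betw h V {0..<card V}" using ex_bij_betw_finite_nat[OF fin] by blast
  have "proper_colouring V E (card V) h"
    unfolding proper_colouring_def
  proof (intro conjI ballI impI)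
    fix v assume "v \<in> V"
    then show "h v < card V" using h bij_betwE by fastforce
  next
    fix u v assume "u \<in> V" "v \<in> V" "E u v"
    moreover have "u \<noteq> v" using irrefl \<open>E u v\<close> by blast
    ultimately show "h u \<noteq> h v" using h unfolding bij_betw_def inj_on_def by blast
  qed
  then show ?thesis unfolding colourable_def by blast
qed

lemma colourable_chromatic_number:
  assumes "simple_graph V E"
  shows "colourable V E (chromatic_number V E)"
  unfolding chromatic_number_def using colourable_card[OF assms] by (rule LeastI)

definition complete_partite_parts ::
  "('b \<Rightarrow> 'b \<Rightarrow> bool) \<Rightarrow> 'b set \<Rightarrow> nat \<Rightarrow> nat \<Rightarrow> (nat \<Rightarrow> 'b set) \<Rightarrow> bool" where
  "complete_partite_parts E S r t X \<longleftrightarrow> (\<forall>i<r. X i \<subseteq> S \<and> card (X i) = t) \<and>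
     (\<forall>i<r. \<forall>j<r. i \<noteq> j \<longrightarrow> X i \<inter> X j = {} \<and> (\<forall>x\<in>X i. \<forall>y\<in>X j. E x y))"

definition has_complete_partite :: "('b \<Rightarrow> 'b \<Rightarrow> bool) \<Rightarrow> 'b set \<Rightarrow> nat \<Rightarrow> nat \<Rightarrow> bool" where
  "has_complete_partite E S r t \<longleftrightarrow> (\<exists>X. complete_partite_parts E S r t X)"

lemma has_complete_partite_zero: "has_complete_partite E S r 0"
  unfolding has_complete_partite_def complete_partite_parts_def
  by (intro exI[of _ "\<lambda>_. {}"]) auto

lemma has_complete_partite_mono:
  assumes "has_complete_partite E S r t" "S \<subseteq> S'"
  shows "has_complete_partite E S' r t"
proof -
  obtain X where "complete_partite_parts E S r t X"
    using assms(1) unfolding has_complete_partite_def by blast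
  then have "complete_partite_parts E S' r t X"
    using assms(2) unfolding complete_partite_parts_def by blast
  then show ?thesis unfolding has_complete_partite_def by blast
qed

lemma exists_injections_into_parts:
  assumes "finite VF" "finite VG" "\<forall>i<r. X i \<subseteq> VG \<and> card (X i) = card VF"
  shows "\<exists>g. \<forall>i<r. g i ` {v\<in>VF. c v = i} \<subseteq> X i \<and> inj_on (g i) {v\<in>VF. c v = i}"
proof -
  have "\<forall>i. \<exists>h. i < r \<longrightarrow> h ` {v\<in>VF. c v = i} \<subseteq> X i \<and> inj_on h {v\<in>VF. c v = i}"
  proof
    fix i
    show "\<exists>h. i < r \<longrightarrow> h ` {v\<in>VF. c v = i} \<subseteq> X i \<and> inj_on h {v\<in>VF. c v = i}"
    proof (cases "i < r")
      case True
      then have X_i: "X i \<subseteq> VG" "card (X i) = card VF" using assms(3) by auto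
      have "finite (X i)" using X_i(1) assms(2) by (rule finite_subset)
      moreover have "card {v\<in>VF. c v = i} \<le> card (X i)" using X_i(2) assms(1) by (simp add: card_mono)
      ultimately show ?thesis using card_le_inj[of "{v\<in>VF. c v = i}" "X i"] assms(1) by auto
    qed simp
  qed
  then show ?thesis by (rule choice[THEN exE]) blast
qed

lemma contains_subgraph_if_has_complete_partite:
  assumes fin: "finite VF" "finite VG"
    and "colourable VF EF r" and "has_complete_partite EG VG r (card VF)"
  shows "contains_subgraph VF EF VG EG"
proof -
  obtain c where c_lt: "\<And>v. v \<in> VF \<Longrightarrow> c v < r"
    and c_proper: "\<And>u v. u \<in> VF \<Longrightarrow> v \<in> VF \<Longrightarrow> EF u v \<Longrightarrow> c u \<noteq> c v"
    using assms(3) unfolding colourable_def proper_colouring_def by blast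
  obtain X where X: "complete_partite_parts EG VG r (card VF) X"
    using assms(4) unfolding has_complete_partite_def by blast
  then have X_sub: "\<And>i. i < r \<Longrightarrow> X i \<subseteq> VG \<and> card (X i) = card VF"
    and X_joined: "\<And>i j. i < r \<Longrightarrow> j < r \<Longrightarrow> i \<noteq> j \<Longrightarrow>
      X i \<inter> X j = {} \<and> (\<forall>x\<in>X i. \<forall>y\<in>X j. EG x y)"
    unfolding complete_partite_parts_def by simp_all
  define C where "C i = {v\<in>VF. c v = i}" for i
  have "\<forall>i<r. X i \<subseteq> VG \<and> card (X i) = card VF" using X_sub by blast
  then obtain g where "\<forall>i<r. g i ` C i \<subseteq> X i \<and> inj_on (g i) (C i)"
    using exists_injections_into_parts[OF fin, of r X c] unfolding C_def by blast
  then have g: "g i ` C i \<subseteq> X i \<and> inj_on (g i) (C i)" if "i < r" for i using that by blast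
  define f where "f v = g (c v) v" for v
  have f_X: "f v \<in> X (c v)" if "v \<in> VF" for v
    using g[OF c_lt[OF that]] that unfolding f_def C_def by blast
  show ?thesis unfolding contains_subgraph_def
  proof (intro exI[of _ f] conjI)
    show "inj_on f VF"
    proof (rule inj_onI)
      fix u v assume u: "u \<in> VF" and v: "v \<in> VF" and "f u = f v"
      have "c u = c v"
      proof (rule ccontr)
        assume "c u \<noteq> c v"
        then have "X (c u) \<inter> X (c v) = {}" using X_joined c_lt u v by blast
        then show False using f_X[OF u] f_X[OF v] \<open>f u = f v\<close> by auto
      qed
      then have "u \<in> C (c u)" "v \<in> C (c u)" using u v unfolding C_def by auto
      then show "u = v"
        using g[OF c_lt[OF u]] \<open>f u = f v\<close> \<open>c u = c v\<close> unfolding f_def inj_on_def by metis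
    qed
    show "f ` VF \<subseteq> VG" using f_X X_sub c_lt by blast
    show "\<forall>u\<in>VF. \<forall>v\<in>VF. EF u v \<longrightarrow> EG (f u) (f v)"
      using f_X X_joined c_lt c_proper by blast
  qed
qed

lemma obtain_subset_constant_on:
  assumes "finite A" "finite B" "B \<noteq> {}" "f \<in> A \<rightarrow> B" "card B * t \<le> card A"
  obtains b W where "W \<subseteq> A" "card W = t" "\<forall>u\<in>W. f u = b"
proof -
  obtain b where "card A \<le> card (f -` {b} \<inter> A) * card B"
    using pigeonhole_card[OF assms(4,1,2,3)] by blast
  moreover have "card B > 0" using assms(2,3) by (simp add: card_gt_0_iff)
  ultimately have "t \<le> card (f -` {b} \<inter> A)" using assms(5)
    by (metis le_trans mult.commute mult_le_cancel2)
  then obtain W where "W \<subseteq> f -` {b} \<inter> A" "card W = t" by (meson obtain_subset_with_card_n)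
  then show ?thesis by (intro that[of W b]) auto
qed

lemma UN_subsets_Int_disjoint:
  assumes "\<forall>j<r. Y j \<subseteq> X j" "\<forall>i<r. \<forall>j<r. i \<noteq> j \<longrightarrow> X i \<inter> X j = {}" "i < r"
  shows "(\<Union>j<r. Y j) \<inter> X i = Y i"
proof
  show "Y i \<subseteq> (\<Union>j<r. Y j) \<inter> X i" using assms(1,3) by blast
  show "(\<Union>j<r. Y j) \<inter> X i \<subseteq> Y i"
  proof
    fix x assume "x \<in> (\<Union>j<r. Y j) \<inter> X i"
    then obtain j where "j < r" "x \<in> Y j" "x \<in> X i" by blast
    with assms show "x \<in> Y i" by (cases "i = j") blast+
  qed
qed

lemma complete_partite_parts_shrink:
  assumes "complete_partite_parts E S r T X" "\<forall>i<r. Y i \<subseteq> X i \<and> card (Y i) = t"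
  shows "complete_partite_parts E S r t Y"
  using assms unfolding complete_partite_parts_def by (meson disjoint_iff order_trans subsetD)

lemma has_complete_partite_SucI:
  assumes "symp E" and X: "complete_partite_parts E S r T X"
    and W: "W \<subseteq> S" "card W = t" "W \<inter> (\<Union>i<r. X i) = {}"
    and Z: "\<forall>i<r. Z i \<subseteq> X i \<and> card (Z i) = t \<and> (\<forall>x\<in>Z i. \<forall>y\<in>W. E x y)"
  shows "has_complete_partite E S (Suc r) t"
proof -
  have "complete_partite_parts E S r t Z"
    using Z by (intro complete_partite_parts_shrink[OF X]) blast
  moreover have "\<forall>i<r. Z i \<inter> W = {}" using Z W(3) by blast
  moreover have "\<forall>i<r. \<forall>x\<in>Z i. \<forall>y\<in>W. E x y \<and> E y x" using Z \<open>symp E\<close> by (blast dest: sympD)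
  ultimately have "complete_partite_parts E S (Suc r) t (Z(r := W))"
    using W(1,2) unfolding complete_partite_parts_def by (auto simp: less_Suc_eq)
  then show ?thesis unfolding has_complete_partite_def by blast
qed

text \<open>Every vertex of \<open>U\<close> chooses \<open>t\<close> of its neighbours in each part. The choices of the
  vertices outside the parts are subsets of the \<open>r T\<close> vertices of the parts, so by pigeonhole
  \<open>t\<close> of them make the same choice; these \<open>t\<close> vertices form the new part.\<close>
lemma has_complete_partite_Suc_of_common_neighbours:
  assumes "finite S" "symp E" and X: "complete_partite_parts E S r T X"
    and "U \<subseteq> S" and many: "r * T + 2 ^ (r * T) * t \<le> card U"
    and nbrs: "\<forall>u\<in>U. \<forall>i<r. t \<le> card {x\<in>X i. E x u}"
  shows "has_complete_partite E S (Suc r) t"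
proof (cases "t = 0")
  case True
  then show ?thesis by (simp add: has_complete_partite_zero)
next
  case False
  have X_sub: "X i \<subseteq> S" "card (X i) = T" if "i < r" for i
    using X that unfolding complete_partite_parts_def by auto
  define Y where "Y u i = (SOME Z. Z \<subseteq> {x\<in>X i. E x u} \<and> card Z = t)" for u i
  have Y: "Y u i \<subseteq> X i" "\<forall>x\<in>Y u i. E x u" "card (Y u i) = t" if "u \<in> U" "i < r" for u i
  proof -
    have "\<exists>Z. Z \<subseteq> {x\<in>X i. E x u} \<and> card Z = t"
      using nbrs that by (meson obtain_subset_with_card_n)
    from someI_ex[OF this] show "Y u i \<subseteq> X i" "\<forall>x\<in>Y u i. E x u" "card (Y u i) = t"
      unfolding Y_def by auto
  qed
  define K where "K = (\<Union>i<r. X i)"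
  define \<phi> where "\<phi> u = (\<Union>i<r. Y u i)" for u
  have "K \<subseteq> S" unfolding K_def using X_sub(1) by blast
  then have "finite K" using \<open>finite S\<close> by (rule finite_subset)
  have "card K \<le> r * T"
    using card_UN_le[of "{..<r}" X] X_sub(2) unfolding K_def by simp
  have \<phi>_X: "\<phi> u \<inter> X i = Y u i" if "u \<in> U" "i < r" for u i
    unfolding \<phi>_def using Y(1)[OF that(1)] X that(2)
    by (intro UN_subsets_Int_disjoint) (auto simp: complete_partite_parts_def)
  have "\<phi> \<in> (U - K) \<rightarrow> Pow K" using Y(1) unfolding \<phi>_def K_def by blast
  moreover have "card (Pow K) * t \<le> card (U - K)"
  proof -
    have "card (Pow K) \<le> 2 ^ (r * T)"
      using card_Pow[OF \<open>finite K\<close>] \<open>card K \<le> r * T\<close> by (simp add: power_increasing)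
    then have "card (Pow K) * t \<le> 2 ^ (r * T) * t" by (rule mult_le_mono1)
    also have "\<dots> \<le> card U - card K" using many \<open>card K \<le> r * T\<close> by linarith
    also have "\<dots> \<le> card (U - K)" by (rule diff_card_le_card_Diff) fact
    finally show ?thesis .
  qed
  ultimately obtain B W where W: "W \<subseteq> U - K" "card W = t" "\<forall>u\<in>W. \<phi> u = B"
    using obtain_subset_constant_on[of "U - K" "Pow K" \<phi> t] \<open>finite K\<close> \<open>finite S\<close> \<open>U \<subseteq> S\<close>
    by (metis Pow_not_empty finite_Diff finite_Pow_iff finite_subset)
  then obtain u0 where "u0 \<in> W" using False by fastforce
  have "\<forall>i<r. Y u0 i \<subseteq> X i \<and> card (Y u0 i) = t \<and> (\<forall>x\<in>Y u0 i. \<forall>y\<in>W. E x y)"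
  proof (intro allI impI conjI ballI)
    fix i assume "i < r"
    have "u0 \<in> U" using W(1) \<open>u0 \<in> W\<close> by blast
    then show "Y u0 i \<subseteq> X i" "card (Y u0 i) = t" using Y \<open>i < r\<close> by auto
    fix x y assume "x \<in> Y u0 i" "y \<in> W"
    then have "x \<in> Y y i" using \<phi>_X W \<open>u0 \<in> W\<close> \<open>i < r\<close> by (metis Diff_iff subsetD)
    then show "E x y" using Y(2) W(1) \<open>y \<in> W\<close> \<open>i < r\<close> by blast
  qed
  moreover have "W \<subseteq> S" "W \<inter> K = {}" using W(1) \<open>U \<subseteq> S\<close> by auto
  ultimately show ?thesis
    using has_complete_partite_SucI[OF \<open>symp E\<close> X _ W(2)] unfolding K_def by blast
qed

section \<open>The weighted Erdos-Stone theorem with minimum degree\<close>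

definition weighted_degree :: "('b \<Rightarrow> 'b \<Rightarrow> bool) \<Rightarrow> 'b set \<Rightarrow> ('b \<Rightarrow> real) \<Rightarrow> 'b \<Rightarrow> real" where
  "weighted_degree E S w v = (\<Sum>u\<in>S. if E v u then w u else 0)"

lemma sum_weighted_degree:
  assumes "finite X"
  shows "(\<Sum>x\<in>X. weighted_degree E S w x) = (\<Sum>u\<in>S. w u * real (card {x\<in>X. E x u}))"
proof -
  have "(\<Sum>x\<in>X. weighted_degree E S w x) = (\<Sum>u\<in>S. \<Sum>x\<in>X. if E x u then w u else 0)"
    unfolding weighted_degree_def by (rule sum.swap)
  also have "\<dots> = (\<Sum>u\<in>S. w u * real (card {x\<in>X. E x u}))"
    using assms by (intro sum.cong refl) (simp add: sum.inter_filter[symmetric])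
  finally show ?thesis .
qed

lemma sum_bounded_except_one:
  fixes f :: "nat \<Rightarrow> nat"
  assumes "\<forall>i<r. f i \<le> T" "i0 < r" "f i0 < t"
  shows "(\<Sum>i<r. real (f i)) \<le> (real r - 1) * T + t"
proof -
  have "(\<Sum>i<r. real (f i)) = real (f i0) + (\<Sum>i\<in>{..<r} - {i0}. real (f i))"
    using assms(2) by (simp add: sum.remove)
  also have "\<dots> \<le> t + (\<Sum>i\<in>{..<r} - {i0}. real T)"
    using assms by (intro add_mono sum_mono) auto
  also have "\<dots> = (real r - 1) * T + t"
    using assms(2) by (simp add: of_nat_diff algebra_simps)
  finally show ?thesis .
qed

text \<open>Double counting the weighted edges between the parts and \<open>S\<close>: a vertex with fewer than
  \<open>t\<close> neighbours in some part has at most \<open>(r - 1) T + t\<close> neighbours in the parts.\<close>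
lemma weight_many_neighbours_in_every_part:
  fixes w :: "'b \<Rightarrow> real"
  assumes "finite S" and parts: "\<forall>i<r. X i \<subseteq> S \<and> card (X i) = T"
    and "0 < r" "0 < T" "2 * real t \<le> T * \<delta>"
    and w_nonneg: "\<forall>v\<in>S. 0 \<le> w v"
    and min_deg: "\<forall>v\<in>S. (1 - 1 / real r + \<delta>) * sum w S \<le> weighted_degree E S w v"
  shows "\<delta> / 2 * sum w S \<le> sum w {u\<in>S. \<forall>i<r. t \<le> card {x\<in>X i. E x u}}"
proof -
  define m where "m u i = card {x\<in>X i. E x u}" for u i
  define U where "U = {u\<in>S. \<forall>i<r. t \<le> m u i}"
  have fin_X: "finite (X i)" if "i < r" for i using parts that assms(1) finite_subset by blast
  have m_le: "m u i \<le> T" if "i < r" for u i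
  proof -
    have "m u i \<le> card (X i)" unfolding m_def using fin_X[OF that] by (intro card_mono) auto
    then show ?thesis using parts that by simp
  qed
  have "((real r - 1) * T + real r * T * \<delta>) * sum w S
      = (\<Sum>i<r. \<Sum>x\<in>X i. (1 - 1 / real r + \<delta>) * sum w S)"
    using parts \<open>0 < r\<close> by (simp add: field_simps)
  also have "\<dots> \<le> (\<Sum>i<r. \<Sum>x\<in>X i. weighted_degree E S w x)"
    using min_deg parts by (intro sum_mono) blast
  also have "\<dots> = (\<Sum>u\<in>S. w u * (\<Sum>i<r. real (m u i)))"
    unfolding m_def using fin_X
    by (simp add: sum_weighted_degree sum_distrib_left sum.swap[where A = "{..<r}"])
  also have "\<dots> \<le> (\<Sum>u\<in>S. w u * ((real r - 1) * T + t + (if u \<in> U then T else 0)))"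
  proof (intro sum_mono mult_left_mono)
    fix u assume "u \<in> S"
    then show "0 \<le> w u" using w_nonneg by blast
    show "(\<Sum>i<r. real (m u i)) \<le> (real r - 1) * T + t + (if u \<in> U then T else 0)"
    proof (cases "u \<in> U")
      case True
      have "(\<Sum>i<r. real (m u i)) \<le> (\<Sum>i<r. real T)" using m_le by (intro sum_mono) auto
      then show ?thesis using True by (simp add: algebra_simps)
    next
      case False
      then obtain i0 where "i0 < r" "m u i0 < t" using \<open>u \<in> S\<close> unfolding U_def by auto
      then show ?thesis using sum_bounded_except_one[of r "m u" T i0 t] m_le False by simp
    qed
  qed
  also have "\<dots> = (\<Sum>u\<in>S. ((real r - 1) * T + t) * w u) + (\<Sum>u\<in>S. if u \<in> U then T * w u else 0)"
    unfolding sum.distrib[symmetric] by (intro sum.cong refl) (simp add: algebra_simps)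
  also have "\<dots> = ((real r - 1) * T + t) * sum w S + T * sum w U"
    using assms(1) unfolding U_def by (simp add: sum.inter_filter[symmetric] sum_distrib_left)
  finally have counted: "(real r * T * \<delta> - t) * sum w S \<le> T * sum w U"
    by (simp add: algebra_simps)
  have "T * \<delta> \<le> real r * T * \<delta>"
    using mult_right_mono[of 1 "real r" "T * \<delta>"] \<open>0 < r\<close> assms(5) by (simp add: mult.assoc)
  then have "T * \<delta> / 2 \<le> real r * T * \<delta> - t" using assms(5) by linarith
  moreover have "0 \<le> sum w S" using w_nonneg by (simp add: sum_nonneg)
  ultimately have "T * \<delta> / 2 * sum w S \<le> (real r * T * \<delta> - t) * sum w S"
    by (rule mult_right_mono)
  with counted have "T * (\<delta> / 2 * sum w S) \<le> T * sum w U" by simp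
  then show ?thesis using \<open>0 < T\<close> unfolding U_def m_def by simp
qed

definition share_bounded :: "real \<Rightarrow> 'b set \<Rightarrow> ('b \<Rightarrow> real) \<Rightarrow> bool" where
  "share_bounded \<eta> S w \<longleftrightarrow> (\<forall>v\<in>S. 0 \<le> w v \<and> w v \<le> \<eta> * sum w S)"

lemma share_bounded_mono:
  assumes "share_bounded \<eta> S w" "\<eta> \<le> \<eta>'"
  shows "share_bounded \<eta>' S w"
proof -
  have "0 \<le> sum w S" using assms(1) unfolding share_bounded_def by (simp add: sum_nonneg)
  then show ?thesis
    using assms unfolding share_bounded_def by (meson mult_right_mono order_trans)
qed

definition blowup_size :: "real \<Rightarrow> nat \<Rightarrow> nat" where
  "blowup_size \<delta> t = t * (nat \<lceil>2 / \<delta>\<rceil> + 1)"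

lemma blowup_size_ge:
  assumes "0 < \<delta>"
  shows "2 * real t \<le> real (blowup_size \<delta> t) * \<delta>"
proof -
  have "2 / \<delta> \<le> real (nat \<lceil>2 / \<delta>\<rceil> + 1)" by linarith
  then have "2 \<le> real (nat \<lceil>2 / \<delta>\<rceil> + 1) * \<delta>" using assms by (simp add: field_simps)
  then have "real t * 2 \<le> real t * (real (nat \<lceil>2 / \<delta>\<rceil> + 1) * \<delta>)" by (intro mult_left_mono) auto
  then show ?thesis unfolding blowup_size_def by (simp add: algebra_simps)
qed

lemma has_complete_partite_one:
  fixes w :: "'b \<Rightarrow> real"
  assumes "finite S" "share_bounded (1 / (real t + 1)) S w" "0 < sum w S"
  shows "has_complete_partite E S 1 t"
proof -
  have "sum w S \<le> card S * (1 / (real t + 1) * sum w S)"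
    using assms(2) unfolding share_bounded_def by (intro sum_bounded_above) blast
  then have "(real t + 1) * sum w S \<le> card S * sum w S" by (simp add: field_simps)
  then have "t + 1 \<le> card S" using assms(3) by (simp add: mult_le_cancel_right)
  then obtain X0 where "X0 \<subseteq> S" "card X0 = t" using obtain_subset_with_card_n[of t S] by auto
  then have "complete_partite_parts E S 1 t (\<lambda>_. X0)" unfolding complete_partite_parts_def by simp
  then show ?thesis unfolding has_complete_partite_def by blast
qed

lemma has_complete_partite_Suc_step:
  fixes w :: "'b \<Rightarrow> real"
  assumes "finite S" "symp E" "0 < \<delta>" "0 < r"
    and "has_complete_partite E S r (blowup_size \<delta> t)"
    and w: "share_bounded (\<delta> / (2 * (real (r * blowup_size \<delta> t
      + 2 ^ (r * blowup_size \<delta> t) * t) + 1))) S w"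
    and "0 < sum w S"
    and min_deg: "\<forall>v\<in>S. (1 - 1 / real r + \<delta>) * sum w S \<le> weighted_degree E S w v"
  shows "has_complete_partite E S (Suc r) t"
proof (cases "t = 0")
  case True
  then show ?thesis by (simp add: has_complete_partite_zero)
next
  case False
  define T where "T = blowup_size \<delta> t"
  define N where "N = r * T + 2 ^ (r * T) * t"
  obtain X where X: "complete_partite_parts E S r T X"
    using assms(5) unfolding has_complete_partite_def T_def by blast
  define U where "U = {u\<in>S. \<forall>i<r. t \<le> card {x\<in>X i. E x u}}"
  have "0 < T" using False unfolding T_def blowup_size_def by simp
  have "\<delta> / 2 * sum w S \<le> sum w U"
    using X w min_deg \<open>0 < T\<close> blowup_size_ge[OF \<open>0 < \<delta>\<close>, of t]
    unfolding U_def share_bounded_def T_def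
    by (intro weight_many_neighbours_in_every_part[OF \<open>finite S\<close> _ \<open>0 < r\<close>])
      (auto simp: complete_partite_parts_def)
  also have "\<dots> \<le> card U * (\<delta> / (2 * (real N + 1)) * sum w S)"
    using w unfolding U_def N_def T_def share_bounded_def by (intro sum_bounded_above) auto
  finally have "(\<delta> / 2 * sum w S) * (real N + 1) \<le> (\<delta> / 2 * sum w S) * card U"
    by (simp add: field_simps)
  then have "real N + 1 \<le> card U"
    using \<open>0 < \<delta>\<close> \<open>0 < sum w S\<close> by (simp add: mult_le_cancel_left_pos)
  then have "N \<le> card U" by linarith
  then show ?thesis
    unfolding N_def using X
    by (intro has_complete_partite_Suc_of_common_neighbours[OF \<open>finite S\<close> \<open>symp E\<close> X, of U])
      (auto simp: U_def)
qed

text \<open>The recursion mirrors the induction below: the step lemma obtains \<open>K_(r+1)(t)\<close> from a copy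
  of \<open>K_r(blowup_size \<delta> t)\<close>, found with the threshold for \<open>r\<close>, and needs the second bound.\<close>
primrec es_threshold :: "real \<Rightarrow> nat \<Rightarrow> nat \<Rightarrow> real" where
  "es_threshold \<delta> 0 t = 1 / (real t + 1)"
| "es_threshold \<delta> (Suc r) t =
     min (es_threshold \<delta> r (blowup_size \<delta> t))
       (\<delta> / (2 * (real (Suc r * blowup_size \<delta> t + 2 ^ (Suc r * blowup_size \<delta> t) * t) + 1)))"

lemma es_threshold_pos: "0 < \<delta> \<Longrightarrow> 0 < es_threshold \<delta> r t"
  by (induction r arbitrary: t) (simp_all add: add_pos_nonneg del: of_nat_add of_nat_mult)

lemma has_complete_partite_of_weighted_min_degree:
  fixes w :: "'b \<Rightarrow> real"
  assumes "finite S" "symp E" "0 < \<delta>" "0 < r"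
    and "share_bounded (es_threshold \<delta> r t) S w" "0 < sum w S"
    and "\<forall>v\<in>S. (1 - 1 / real r + \<delta>) * sum w S \<le> weighted_degree E S w v"
  shows "has_complete_partite E S (Suc r) t"
  using assms(4-)
proof (induction r arbitrary: t rule: nat_induct_non_zero)
  case 1
  have "share_bounded (1 / (real (blowup_size \<delta> t) + 1)) S w"
    by (rule share_bounded_mono[OF 1(1)]) simp
  then have parts: "has_complete_partite E S 1 (blowup_size \<delta> t)"
    using 1(2) by (rule has_complete_partite_one[OF \<open>finite S\<close>])
  have "share_bounded (\<delta> / (2 * (real (1 * blowup_size \<delta> t
      + 2 ^ (1 * blowup_size \<delta> t) * t) + 1))) S w"
    by (rule share_bounded_mono[OF 1(1)]) simp
  from has_complete_partite_Suc_step[OF \<open>finite S\<close> \<open>symp E\<close> \<open>0 < \<delta>\<close> _ parts this 1(2,3)]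
  show ?case by simp
next
  case (Suc r)
  have "\<forall>v\<in>S. (1 - 1 / real r + \<delta>) * sum w S \<le> weighted_degree E S w v"
  proof
    fix v assume "v \<in> S"
    have "(1 - 1 / real r + \<delta>) * sum w S \<le> (1 - 1 / real (Suc r) + \<delta>) * sum w S"
      using Suc.hyps \<open>0 < sum w S\<close> by (intro mult_right_mono) (auto simp: frac_le)
    also have "\<dots> \<le> weighted_degree E S w v" using Suc.prems(3) \<open>v \<in> S\<close> by blast
    finally show "(1 - 1 / real r + \<delta>) * sum w S \<le> weighted_degree E S w v" .
  qed
  moreover have "share_bounded (es_threshold \<delta> r (blowup_size \<delta> t)) S w"
    by (rule share_bounded_mono[OF Suc.prems(1)]) simp
  ultimately have parts: "has_complete_partite E S (Suc r) (blowup_size \<delta> t)"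
    using Suc.IH Suc.prems(2) by blast
  have "share_bounded (\<delta> / (2 * (real (Suc r * blowup_size \<delta> t
      + 2 ^ (Suc r * blowup_size \<delta> t) * t) + 1))) S w"
    by (rule share_bounded_mono[OF Suc.prems(1)]) simp
  from has_complete_partite_Suc_step[OF \<open>finite S\<close> \<open>symp E\<close> \<open>0 < \<delta>\<close> _ parts this Suc.prems(2,3)]
  show ?case by simp
qed

section \<open>The weighted Erdos-Stone theorem\<close>

definition adjacency_form :: "('b \<Rightarrow> 'b \<Rightarrow> bool) \<Rightarrow> 'b set \<Rightarrow> ('b \<Rightarrow> real) \<Rightarrow> real" where
  "adjacency_form E S x = (\<Sum>a\<in>S. \<Sum>b\<in>S. if E a b then x a * x b else 0)"

lemma adjacency_form_le_square_sum:
  assumes "\<forall>v\<in>S. 0 \<le> x v"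
  shows "adjacency_form E S x \<le> (sum x S)\<^sup>2"
proof -
  have "adjacency_form E S x \<le> (\<Sum>a\<in>S. \<Sum>b\<in>S. x a * x b)"
    unfolding adjacency_form_def using assms by (intro sum_mono) auto
  also have "\<dots> = (sum x S)\<^sup>2" by (simp add: power2_eq_square sum_product)
  finally show ?thesis .
qed

lemma adjacency_form_remove:
  assumes "finite S" "symp E" "irreflp E" "v \<in> S"
  shows "adjacency_form E (S - {v}) x = adjacency_form E S x - 2 * x v * weighted_degree E S x v"
proof -
  define g where "g a b = (if E a b then x a * x b else 0)" for a b
  have form_g: "adjacency_form E S' x = (\<Sum>a\<in>S'. \<Sum>b\<in>S'. g a b)" for S'
    unfolding adjacency_form_def g_def by simp
  have row_v: "(\<Sum>b\<in>S. g v b) = x v * weighted_degree E S x v"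
    unfolding g_def weighted_degree_def by (simp add: sum_distrib_left if_distrib cong: if_cong)
  have "(\<Sum>a\<in>S - {v}. g a v) = x v * (\<Sum>a\<in>S - {v}. if E v a then x a else 0)"
    unfolding g_def sum_distrib_left using \<open>symp E\<close>
    by (intro sum.cong refl) (auto simp: mult.commute sympD)
  also have "(\<Sum>a\<in>S - {v}. if E v a then x a else 0) = weighted_degree E S x v"
    unfolding weighted_degree_def using assms(1,3,4) by (simp add: sum.remove irreflpD)
  finally have column_v: "(\<Sum>a\<in>S - {v}. g a v) = x v * weighted_degree E S x v" .
  have "adjacency_form E S x = (\<Sum>b\<in>S. g v b) + (\<Sum>a\<in>S - {v}. \<Sum>b\<in>S. g a b)"
    unfolding form_g by (rule sum.remove[OF assms(1,4)])
  also have "(\<Sum>a\<in>S - {v}. \<Sum>b\<in>S. g a b) = (\<Sum>a\<in>S - {v}. g a v + (\<Sum>b\<in>S - {v}. g a b))"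
    by (intro sum.cong refl) (rule sum.remove[OF assms(1,4)])
  also have "\<dots> = (\<Sum>a\<in>S - {v}. g a v) + adjacency_form E (S - {v}) x"
    unfolding form_g by (simp add: sum.distrib)
  finally show ?thesis using row_v column_v by simp
qed

lemma potential_le_remove:
  fixes w :: "'b \<Rightarrow> real"
  assumes "finite S" "symp E" "irreflp E" "v \<in> S"
    and "0 \<le> w v" "\<beta> * (w v)\<^sup>2 \<le> c * w v" "weighted_degree E S w v \<le> \<beta> * sum w S"
  shows "adjacency_form E S w - \<beta> * (sum w S)\<^sup>2 - c * sum w S
    \<le> adjacency_form E (S - {v}) w - \<beta> * (sum w (S - {v}))\<^sup>2 - c * sum w (S - {v})"
proof -
  have potential_change: "(P - 2 * x * d) - \<beta> * (W - x)\<^sup>2 - c * (W - x)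
      = (P - \<beta> * W\<^sup>2 - c * W) + 2 * x * (\<beta> * W - d) + (c * x - \<beta> * x\<^sup>2)"
    for P x d W :: real
    by (simp add: power2_eq_square algebra_simps)
  have "adjacency_form E (S - {v}) w - \<beta> * (sum w (S - {v}))\<^sup>2 - c * sum w (S - {v})
      = (adjacency_form E S w - \<beta> * (sum w S)\<^sup>2 - c * sum w S)
        + 2 * w v * (\<beta> * sum w S - weighted_degree E S w v) + (c * w v - \<beta> * (w v)\<^sup>2)"
    unfolding adjacency_form_remove[OF assms(1-4)] sum_diff1[OF assms(1)] if_P[OF assms(4)]
    by (rule potential_change)
  moreover have "0 \<le> 2 * w v * (\<beta> * sum w S - weighted_degree E S w v)"
    using assms(5,7) by simp
  ultimately show ?thesis using assms(6) by linarith
qed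

text \<open>Vertices of weighted degree below \<open>\<beta> \<Sum>w\<close> are deleted one at a time; by the previous
  lemma this never decreases the potential \<open>w\<^sup>TAw - \<beta> (\<Sum>w)\<^sup>2 - c \<Sum>w\<close>.\<close>
lemma exists_subset_weighted_min_degree:
  fixes w :: "'b \<Rightarrow> real"
  assumes "finite S" "symp E" "irreflp E"
    and "\<forall>v\<in>S. 0 \<le> w v" and "\<forall>v\<in>S. \<beta> * (w v)\<^sup>2 \<le> c * w v"
  shows "\<exists>S'\<subseteq>S. adjacency_form E S w - \<beta> * (sum w S)\<^sup>2 - c * sum w S
      \<le> adjacency_form E S' w - \<beta> * (sum w S')\<^sup>2 - c * sum w S'
    \<and> (\<forall>v\<in>S'. \<beta> * sum w S' \<le> weighted_degree E S' w v)"
  using assms(1,4,5)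
proof (induction "card S" arbitrary: S rule: less_induct)
  case less
  show ?case
  proof (cases "\<forall>v\<in>S. \<beta> * sum w S \<le> weighted_degree E S w v")
    case True
    then show ?thesis by blast
  next
    case False
    then obtain v where v: "v \<in> S" and low: "weighted_degree E S w v < \<beta> * sum w S" by force
    have "card (S - {v}) < card S" using less.prems(1) v by (meson card_Diff1_less)
    then have "\<exists>S'\<subseteq>S - {v}.
        adjacency_form E (S - {v}) w - \<beta> * (sum w (S - {v}))\<^sup>2 - c * sum w (S - {v})
          \<le> adjacency_form E S' w - \<beta> * (sum w S')\<^sup>2 - c * sum w S'
        \<and> (\<forall>v\<in>S'. \<beta> * sum w S' \<le> weighted_degree E S' w v)"
      by (rule less.hyps) (use less.prems in auto)
    then obtain S' where S': "S' \<subseteq> S - {v}"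
      and potential: "adjacency_form E (S - {v}) w - \<beta> * (sum w (S - {v}))\<^sup>2 - c * sum w (S - {v})
        \<le> adjacency_form E S' w - \<beta> * (sum w S')\<^sup>2 - c * sum w S'"
      and min_deg: "\<forall>v\<in>S'. \<beta> * sum w S' \<le> weighted_degree E S' w v"
      by blast
    have "adjacency_form E S w - \<beta> * (sum w S)\<^sup>2 - c * sum w S
        \<le> adjacency_form E (S - {v}) w - \<beta> * (sum w (S - {v}))\<^sup>2 - c * sum w (S - {v})"
      using less.prems(2,3) v low
      by (intro potential_le_remove[OF less.prems(1) assms(2,3) v]) auto
    then have "adjacency_form E S w - \<beta> * (sum w S)\<^sup>2 - c * sum w S
        \<le> adjacency_form E S' w - \<beta> * (sum w S')\<^sup>2 - c * sum w S'"
      using potential by (rule order_trans)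
    moreover have "S' \<subseteq> S" using S' by blast
    ultimately show ?thesis using min_deg by (intro exI[of _ S'] conjI)
  qed
qed

lemma obtain_weighted_min_degree_core:
  fixes x :: "'b \<Rightarrow> real"
  assumes "finite V" "symp E" "irreflp E" "0 < \<delta>" "0 < \<beta>"
    and x: "share_bounded (\<delta> / (4 * \<beta>)) V x"
    and dense: "(\<beta> + \<delta> / 2) * (sum x V)\<^sup>2 \<le> adjacency_form E V x"
  obtains S where "S \<subseteq> V" "sqrt \<delta> / 2 * sum x V \<le> sum x S"
    "\<forall>v\<in>S. \<beta> * sum x S \<le> weighted_degree E S x v"
proof -
  define W where "W = sum x V"
  define c where "c = \<delta> / 4 * W"
  have x_nonneg: "\<forall>v\<in>V. 0 \<le> x v" using x unfolding share_bounded_def by blast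
  have "0 \<le> W" unfolding W_def using x_nonneg by (simp add: sum_nonneg)
  have "\<forall>v\<in>V. \<beta> * (x v)\<^sup>2 \<le> c * x v"
  proof
    fix v assume "v \<in> V"
    then have "\<beta> * x v * x v \<le> \<beta> * x v * (\<delta> / (4 * \<beta>) * W)"
      using x \<open>0 < \<beta>\<close> unfolding share_bounded_def W_def by (intro mult_left_mono) auto
    then show "\<beta> * (x v)\<^sup>2 \<le> c * x v"
      unfolding c_def using \<open>0 < \<beta>\<close> by (simp add: power2_eq_square field_simps)
  qed
  then obtain S where "S \<subseteq> V"
    and potential: "adjacency_form E V x - \<beta> * W\<^sup>2 - c * W
      \<le> adjacency_form E S x - \<beta> * (sum x S)\<^sup>2 - c * sum x S"
    and min_deg: "\<forall>v\<in>S. \<beta> * sum x S \<le> weighted_degree E S x v"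
    using exists_subset_weighted_min_degree[OF assms(1-3) x_nonneg] unfolding W_def by blast
  have "0 \<le> sum x S" using x_nonneg \<open>S \<subseteq> V\<close> by (intro sum_nonneg) auto
  have "(sqrt \<delta> / 2 * W)\<^sup>2 = adjacency_form E V x - \<beta> * W\<^sup>2 - c * W
      - (adjacency_form E V x - (\<beta> + \<delta> / 2) * W\<^sup>2)"
    using \<open>0 < \<delta>\<close> unfolding c_def by (simp add: power2_eq_square algebra_simps)
  also have "\<dots> \<le> adjacency_form E V x - \<beta> * W\<^sup>2 - c * W" using dense unfolding W_def by simp
  also have "\<dots> \<le> adjacency_form E S x"
  proof -
    have "0 \<le> \<beta> * (sum x S)\<^sup>2" "0 \<le> c * sum x S"
      using \<open>0 < \<beta>\<close> \<open>0 < \<delta>\<close> \<open>0 \<le> W\<close> \<open>0 \<le> sum x S\<close> unfolding c_def by simp_all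
    then show ?thesis using potential by linarith
  qed
  also have "\<dots> \<le> (sum x S)\<^sup>2"
    using x_nonneg \<open>S \<subseteq> V\<close> by (intro adjacency_form_le_square_sum) auto
  finally have "sqrt \<delta> / 2 * W \<le> sum x S"
    using \<open>0 \<le> sum x S\<close> by (rule power2_le_imp_le)
  then show ?thesis using that \<open>S \<subseteq> V\<close> min_deg unfolding W_def by blast
qed

text \<open>The first bound lets the deletion argument keep a core of weight at least
  \<open>sqrt \<delta> / 2 \<cdot> \<Sum>x\<close>; the second turns shares of \<open>\<Sum>x\<close> into \<open>es_threshold\<close>-shares of the core.\<close>
definition density_threshold :: "real \<Rightarrow> nat \<Rightarrow> nat \<Rightarrow> real" where
  "density_threshold \<delta> r t =
     min (\<delta> / (4 * (1 - 1 / real r + \<delta> / 2))) (es_threshold (\<delta> / 2) r t * sqrt \<delta> / 2)"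

lemma turan_density_gap_pos:
  assumes "0 < r" "0 < \<delta>"
  shows "0 < 1 - 1 / real r + \<delta>"
proof -
  have "1 / real r \<le> 1" using assms(1) by simp
  then show ?thesis using assms(2) by linarith
qed

lemma density_threshold_pos: "0 < \<delta> \<Longrightarrow> 0 < r \<Longrightarrow> 0 < density_threshold \<delta> r t"
  unfolding density_threshold_def using turan_density_gap_pos[of r "\<delta> / 2"]
  by (simp add: es_threshold_pos)

lemma has_complete_partite_of_weighted_density:
  fixes x :: "'b \<Rightarrow> real"
  assumes "finite V" "symp E" "irreflp E" "0 < \<delta>" "0 < r"
    and x: "share_bounded (density_threshold \<delta> r t) V x" and "0 < sum x V"
    and dense: "(1 - 1 / real r + \<delta>) * (sum x V)\<^sup>2 \<le> adjacency_form E V x"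
  shows "has_complete_partite E V (Suc r) t"
proof -
  define \<beta> where "\<beta> = 1 - 1 / real r + \<delta> / 2"
  define \<eta> where "\<eta> = es_threshold (\<delta> / 2) r t"
  have "0 < \<beta>" unfolding \<beta>_def using \<open>0 < r\<close> \<open>0 < \<delta>\<close> by (simp add: turan_density_gap_pos)
  have "share_bounded (\<delta> / (4 * \<beta>)) V x"
    using x unfolding density_threshold_def \<beta>_def by (rule share_bounded_mono) simp
  moreover have "(\<beta> + \<delta> / 2) * (sum x V)\<^sup>2 \<le> adjacency_form E V x"
    using dense unfolding \<beta>_def by (simp add: algebra_simps)
  ultimately obtain S where "S \<subseteq> V" and core: "sqrt \<delta> / 2 * sum x V \<le> sum x S"
    and min_deg: "\<forall>v\<in>S. \<beta> * sum x S \<le> weighted_degree E S x v"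
    by (rule obtain_weighted_min_degree_core[OF assms(1-4) \<open>0 < \<beta>\<close>])
  have "share_bounded \<eta> S x"
    unfolding share_bounded_def
  proof
    fix v assume "v \<in> S"
    then have "0 \<le> x v" using x \<open>S \<subseteq> V\<close> unfolding share_bounded_def by auto
    have "x v \<le> density_threshold \<delta> r t * sum x V"
      using x \<open>v \<in> S\<close> \<open>S \<subseteq> V\<close> unfolding share_bounded_def by auto
    also have "\<dots> \<le> \<eta> * sqrt \<delta> / 2 * sum x V"
      using \<open>0 < sum x V\<close> unfolding density_threshold_def \<eta>_def
      by (intro mult_right_mono min.cobounded2) simp
    also have "\<dots> = \<eta> * (sqrt \<delta> / 2 * sum x V)" by simp
    also have "\<dots> \<le> \<eta> * sum x S"
      using core es_threshold_pos[of "\<delta> / 2"] \<open>0 < \<delta>\<close> unfolding \<eta>_def by (simp add: mult_left_mono)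
    finally show "0 \<le> x v \<and> x v \<le> \<eta> * sum x S" using \<open>0 \<le> x v\<close> by simp
  qed
  moreover have "0 < sum x S"
  proof -
    have "0 < sqrt \<delta> / 2 * sum x V" using \<open>0 < sum x V\<close> \<open>0 < \<delta>\<close> by simp
    then show ?thesis using core by linarith
  qed
  ultimately have "has_complete_partite E S (Suc r) t"
    using min_deg \<open>S \<subseteq> V\<close> \<open>finite V\<close> \<open>symp E\<close> \<open>0 < \<delta>\<close> \<open>0 < r\<close>
    unfolding \<eta>_def \<beta>_def
    by (intro has_complete_partite_of_weighted_min_degree[where \<delta> = "\<delta> / 2"])
      (auto intro: finite_subset)
  then show ?thesis using \<open>S \<subseteq> V\<close> by (rule has_complete_partite_mono)
qed

section \<open>A dense weighting from the degree sequence\<close>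

lemma sum_adjacent_degree:
  assumes "finite V"
  shows "(\<Sum>a\<in>V. \<Sum>b\<in>V. if E a b then real (degree V E a) else 0)
    = (\<Sum>a\<in>V. (real (degree V E a))\<^sup>2)"
  using assms unfolding degree_def
  by (intro sum.cong refl) (simp add: sum.inter_filter[symmetric] power2_eq_square)

lemma adjacency_form_degree_perturbation:
  assumes "finite V" "symp E"
  shows "adjacency_form E V (\<lambda>v. 1 + real (degree V E v) / \<mu>)
      - adjacency_form E V (\<lambda>v. 1 - real (degree V E v) / \<mu>)
    = 4 / \<mu> * (\<Sum>v\<in>V. (real (degree V E v))\<^sup>2)"
proof -
  define d where "d v = real (degree V E v)" for v
  have "(\<Sum>a\<in>V. \<Sum>b\<in>V. if E a b then d b else 0) = (\<Sum>b\<in>V. \<Sum>a\<in>V. if E b a then d b else 0)"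
    using \<open>symp E\<close> by (subst sum.swap) (intro sum.cong refl, auto dest: sympD)
  then have sums: "(\<Sum>a\<in>V. \<Sum>b\<in>V. if E a b then d b else 0) = (\<Sum>v\<in>V. (d v)\<^sup>2)"
    "(\<Sum>a\<in>V. \<Sum>b\<in>V. if E a b then d a else 0) = (\<Sum>v\<in>V. (d v)\<^sup>2)"
    using sum_adjacent_degree[OF \<open>finite V\<close>, of E] unfolding d_def by simp_all
  have "adjacency_form E V (\<lambda>v. 1 + d v / \<mu>) - adjacency_form E V (\<lambda>v. 1 - d v / \<mu>)
      = (\<Sum>a\<in>V. \<Sum>b\<in>V. 2 / \<mu> * ((if E a b then d a else 0) + (if E a b then d b else 0)))"
    unfolding adjacency_form_def sum_subtractf[symmetric]
    by (intro sum.cong refl) (simp add: algebra_simps add_divide_distrib)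
  also have "\<dots> = 2 / \<mu> * ((\<Sum>a\<in>V. \<Sum>b\<in>V. if E a b then d a else 0)
      + (\<Sum>a\<in>V. \<Sum>b\<in>V. if E a b then d b else 0))"
    by (simp only: distrib_left sum_distrib_left sum.distrib)
  also have "\<dots> = 4 / \<mu> * (\<Sum>v\<in>V. (d v)\<^sup>2)" unfolding sums by simp
  finally show ?thesis unfolding d_def .
qed

lemma adjacency_form_abs:
  "- adjacency_form E S x \<le> adjacency_form E S (\<lambda>v. \<bar>x v\<bar>)"
proof -
  have "- adjacency_form E S x = (\<Sum>a\<in>S. \<Sum>b\<in>S. - (if E a b then x a * x b else 0))"
    unfolding adjacency_form_def by (simp add: sum_negf)
  also have "\<dots> \<le> adjacency_form E S (\<lambda>v. \<bar>x v\<bar>)"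
    unfolding adjacency_form_def by (intro sum_mono) (auto simp: abs_mult[symmetric])
  finally show ?thesis .
qed

text \<open>The vectors \<open>p = 1 + d/\<mu>\<close> and \<open>q = 1 - d/\<mu>\<close> satisfy \<open>p\<^sup>TAp - q\<^sup>TAq = 4\<mu>n\<close> and
  \<open>|p|\<^sup>2 + |q|\<^sup>2 = 4n\<close>, so if \<open>p\<close> does not work, then \<open>|q|\<close> does.\<close>
lemma exists_weighting_from_degree_rms:
  fixes \<mu> m :: real
  assumes "simple_graph V E" "0 < \<mu>"
    and rms: "\<mu>\<^sup>2 * card V = (\<Sum>v\<in>V. (real (degree V E v))\<^sup>2)"
    and "0 \<le> m" "m \<le> \<mu>"
  shows "\<exists>x. (\<forall>v\<in>V. 0 \<le> x v \<and> x v \<le> 1 + card V / \<mu>)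
    \<and> m * (\<Sum>v\<in>V. (x v)\<^sup>2) \<le> adjacency_form E V x
    \<and> min m (4 * (\<mu> - m)) * card V \<le> adjacency_form E V x"
proof -
  define n where "n = real (card V)"
  define d where "d v = real (degree V E v)" for v
  define p where "p v = 1 + d v / \<mu>" for v
  define q where "q v = 1 - d v / \<mu>" for v
  have "finite V" "symp E" using simple_graphD[OF assms(1)] by auto
  have "d v \<le> n" for v
    unfolding d_def n_def degree_def using \<open>finite V\<close> by (simp add: card_mono)
  then have d_div: "0 \<le> d v / \<mu>" "d v / \<mu> \<le> n / \<mu>" for v
    unfolding d_def using \<open>0 < \<mu>\<close> by (simp_all add: divide_right_mono)
  have p_bounds: "1 \<le> p v" "p v \<le> 1 + n / \<mu>" and abs_q_le: "\<bar>q v\<bar> \<le> 1 + n / \<mu>" for v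
    unfolding p_def q_def using d_div[of v] by (auto simp: abs_le_iff)
  have forms: "adjacency_form E V p - adjacency_form E V q = 4 * \<mu> * n"
    using adjacency_form_degree_perturbation[OF \<open>finite V\<close> \<open>symp E\<close>, of \<mu>] \<open>0 < \<mu>\<close>
    unfolding p_def q_def d_def n_def rms[symmetric] by (simp add: power2_eq_square)
  have squares: "(\<Sum>v\<in>V. (p v)\<^sup>2) + (\<Sum>v\<in>V. (q v)\<^sup>2) = 4 * n"
  proof -
    have "(\<Sum>v\<in>V. (p v)\<^sup>2) + (\<Sum>v\<in>V. (q v)\<^sup>2) = (\<Sum>v\<in>V. 2 + 2 / \<mu>\<^sup>2 * (d v)\<^sup>2)"
      unfolding sum.distrib[symmetric] p_def q_def
      using \<open>0 < \<mu>\<close> by (intro sum.cong refl) (simp add: power2_eq_square field_simps)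
    also have "\<dots> = 4 * n"
      using \<open>0 < \<mu>\<close> unfolding sum.distrib sum_distrib_left[symmetric] d_def n_def rms[symmetric]
      by simp
    finally show ?thesis .
  qed
  show ?thesis
  proof (cases "m * (\<Sum>v\<in>V. (p v)\<^sup>2) \<le> adjacency_form E V p")
    case True
    have "n \<le> (\<Sum>v\<in>V. (p v)\<^sup>2)"
      using sum_mono[of V "\<lambda>_. 1" "\<lambda>v. (p v)\<^sup>2"] p_bounds(1) unfolding n_def
      by (simp add: one_le_power)
    then have "min m (4 * (\<mu> - m)) * n \<le> m * (\<Sum>v\<in>V. (p v)\<^sup>2)"
      using \<open>0 \<le> m\<close> unfolding n_def by (intro order_trans[OF mult_right_mono mult_left_mono]) auto
    then show ?thesis
      using True p_bounds unfolding n_def by (intro exI[of _ p]) (auto intro: order_trans[OF zero_le_one])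
  next
    case False
    have "m * (\<Sum>v\<in>V. (p v)\<^sup>2) + m * (\<Sum>v\<in>V. (q v)\<^sup>2) = 4 * m * n"
      using arg_cong[OF squares, of "\<lambda>s. m * s"] by (simp add: algebra_simps)
    then have "4 * \<mu> * n - 4 * m * n + m * (\<Sum>v\<in>V. (q v)\<^sup>2) < - adjacency_form E V q"
      using False forms by linarith
    then have "4 * (\<mu> - m) * n + m * (\<Sum>v\<in>V. (q v)\<^sup>2) < - adjacency_form E V q"
      by (simp add: algebra_simps)
    also have "\<dots> \<le> adjacency_form E V (\<lambda>v. \<bar>q v\<bar>)" by (rule adjacency_form_abs)
    finally have abs_q: "4 * (\<mu> - m) * n + m * (\<Sum>v\<in>V. \<bar>q v\<bar>\<^sup>2) < adjacency_form E V (\<lambda>v. \<bar>q v\<bar>)"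
      by simp
    moreover have "0 \<le> 4 * (\<mu> - m) * n" "0 \<le> m * (\<Sum>v\<in>V. \<bar>q v\<bar>\<^sup>2)"
      using \<open>m \<le> \<mu>\<close> \<open>0 \<le> m\<close> unfolding n_def by (simp_all add: sum_nonneg)
    moreover have "min m (4 * (\<mu> - m)) * n \<le> 4 * (\<mu> - m) * n"
      unfolding n_def by (intro mult_right_mono) auto
    ultimately show ?thesis
      using abs_q_le unfolding n_def by (intro exI[of _ "\<lambda>v. \<bar>q v\<bar>"]) auto
  qed
qed

lemma obtain_quadratic_mean_above:
  fixes f :: "'b \<Rightarrow> real" and c :: real
  assumes "0 \<le> c" and large: "c\<^sup>2 * real (card V) ^ 3 < (\<Sum>v\<in>V. (f v)\<^sup>2)"
  obtains \<mu> :: real where "\<mu>\<^sup>2 * card V = (\<Sum>v\<in>V. (f v)\<^sup>2)" "c * card V < \<mu>"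
proof -
  define n where "n = real (card V)"
  define Q where "Q = (\<Sum>v\<in>V. (f v)\<^sup>2)"
  have "0 < n"
  proof (rule ccontr)
    assume "\<not> 0 < n"
    then have "card V = 0" unfolding n_def by simp
    then have "Q = 0" unfolding Q_def by (metis card_0_eq sum.empty sum.infinite)
    then show False using large \<open>card V = 0\<close> unfolding Q_def by simp
  qed
  have "0 \<le> Q" unfolding Q_def by (simp add: sum_nonneg)
  define \<mu> where "\<mu> = sqrt (Q / n)"
  have "0 \<le> Q / n" using \<open>0 \<le> Q\<close> \<open>0 < n\<close> by (rule divide_nonneg_pos)
  then have \<mu>_sq: "\<mu>\<^sup>2 * n = Q" unfolding \<mu>_def using \<open>0 < n\<close> by (simp add: real_sqrt_pow2)
  have "(c * n)\<^sup>2 * n < \<mu>\<^sup>2 * n"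
    using large unfolding \<mu>_sq by (simp add: n_def Q_def power2_eq_square power3_eq_cube algebra_simps)
  then have "(c * n)\<^sup>2 < \<mu>\<^sup>2" using \<open>0 < n\<close> by simp
  then have "c * n < \<mu>"
    unfolding \<mu>_def by (rule power_less_imp_less_base) (use \<open>0 \<le> Q / n\<close> in simp)
  then show ?thesis using that \<mu>_sq unfolding n_def Q_def by blast
qed

lemma adjacency_form_ge_of_quadratic_bound:
  fixes a m :: real and x :: "'b \<Rightarrow> real"
  assumes "a * card V \<le> m" "0 \<le> a" "m * (\<Sum>v\<in>V. (x v)\<^sup>2) \<le> adjacency_form E V x"
  shows "a * (sum x V)\<^sup>2 \<le> adjacency_form E V x"
proof -
  have "(sum x V)\<^sup>2 \<le> card V * (\<Sum>v\<in>V. (x v)\<^sup>2)"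
    using Cauchy_Schwarz_ineq_sum[of "\<lambda>_. 1" x V] by simp
  then have "a * (sum x V)\<^sup>2 \<le> a * (card V * (\<Sum>v\<in>V. (x v)\<^sup>2))"
    using assms(2) by (rule mult_left_mono)
  also have "\<dots> = (a * card V) * (\<Sum>v\<in>V. (x v)\<^sup>2)" by simp
  also have "\<dots> \<le> m * (\<Sum>v\<in>V. (x v)\<^sup>2)" using assms(1) by (intro mult_right_mono) (auto simp: sum_nonneg)
  finally show ?thesis using assms(3) by simp
qed

lemma dense_weighting_of_degree_squares:
  fixes \<alpha> \<epsilon> :: real
  assumes "simple_graph V E" "1 / 2 \<le> \<alpha>" "0 < \<epsilon>"
    and large: "(\<alpha> + \<epsilon>)\<^sup>2 * real (card V) ^ 3 < (\<Sum>v\<in>V. (real (degree V E v))\<^sup>2)"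
  shows "\<exists>x. (\<forall>v\<in>V. 0 \<le> x v \<and> x v \<le> 3) \<and> (\<alpha> + \<epsilon> / 2) * (sum x V)\<^sup>2 \<le> adjacency_form E V x
    \<and> min (1 / 2) (2 * \<epsilon>) * (real (card V))\<^sup>2 \<le> (sum x V)\<^sup>2"
proof -
  define n where "n = real (card V)"
  obtain \<mu> where rms: "\<mu>\<^sup>2 * n = (\<Sum>v\<in>V. (real (degree V E v))\<^sup>2)" and "(\<alpha> + \<epsilon>) * n < \<mu>"
    using obtain_quadratic_mean_above[OF _ large] assms(2,3) unfolding n_def by auto
  define m where "m = \<mu> - \<epsilon> / 2 * n"
  have "0 \<le> n" unfolding n_def by simp
  then have "n / 2 \<le> (\<alpha> + \<epsilon> / 2) * n"
    using mult_right_mono[of "1 / 2" "\<alpha> + \<epsilon> / 2" n] assms(2,3) by simp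
  moreover have m_ge: "(\<alpha> + \<epsilon> / 2) * n \<le> m"
    unfolding m_def using \<open>(\<alpha> + \<epsilon>) * n < \<mu>\<close> by (simp add: algebra_simps)
  ultimately have "n / 2 \<le> m" "m \<le> \<mu>"
    using \<open>0 \<le> n\<close> \<open>0 < \<epsilon>\<close> unfolding m_def by auto
  have "0 \<le> (\<alpha> + \<epsilon>) * n" using assms(2,3) \<open>0 \<le> n\<close> by simp
  then have "0 < \<mu>" using \<open>(\<alpha> + \<epsilon>) * n < \<mu>\<close> by linarith
  obtain x where x_le: "\<forall>v\<in>V. 0 \<le> x v \<and> x v \<le> 1 + n / \<mu>"
    and form_ge: "m * (\<Sum>v\<in>V. (x v)\<^sup>2) \<le> adjacency_form E V x"
    and form_large: "min m (4 * (\<mu> - m)) * n \<le> adjacency_form E V x"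
    using exists_weighting_from_degree_rms[OF assms(1) \<open>0 < \<mu>\<close> _ _ \<open>m \<le> \<mu>\<close>] rms
      \<open>n / 2 \<le> m\<close> \<open>0 \<le> n\<close> unfolding n_def by fastforce
  have "n / \<mu> \<le> 2" using \<open>n / 2 \<le> m\<close> \<open>m \<le> \<mu>\<close> \<open>0 < \<mu>\<close> by (simp add: field_simps)
  then have x_bounds: "\<forall>v\<in>V. 0 \<le> x v \<and> x v \<le> 3" using x_le by fastforce
  have dense: "(\<alpha> + \<epsilon> / 2) * (sum x V)\<^sup>2 \<le> adjacency_form E V x"
    using m_ge assms(2,3) form_ge unfolding n_def by (intro adjacency_form_ge_of_quadratic_bound) auto
  have "min (1 / 2) (2 * \<epsilon>) * n \<le> m"
    using \<open>n / 2 \<le> m\<close> mult_right_mono[OF min.cobounded1[of "1 / 2" "2 * \<epsilon>"] \<open>0 \<le> n\<close>] by simp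
  moreover have "min (1 / 2) (2 * \<epsilon>) * n \<le> 4 * (\<mu> - m)"
    using mult_right_mono[OF min.cobounded2[of "1 / 2" "2 * \<epsilon>"] \<open>0 \<le> n\<close>] unfolding m_def by simp
  ultimately have "min (1 / 2) (2 * \<epsilon>) * n * n \<le> min m (4 * (\<mu> - m)) * n"
    using \<open>0 \<le> n\<close> by (intro mult_right_mono) auto
  also have "\<dots> \<le> (sum x V)\<^sup>2"
    using form_large adjacency_form_le_square_sum[of V x E] x_bounds by auto
  finally show ?thesis using x_bounds dense unfolding n_def by (auto simp: power2_eq_square mult.assoc)
qed

lemma share_bounded_weighting_of_degree_squares:
  fixes \<alpha> \<epsilon> \<eta> :: real
  assumes "simple_graph V E" "1 / 2 \<le> \<alpha>" "0 < \<epsilon>" "0 < \<eta>"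
    and n_large: "3 / (\<eta> * sqrt (min (1 / 2) (2 * \<epsilon>))) \<le> card V"
    and "(\<alpha> + \<epsilon>)\<^sup>2 * real (card V) ^ 3 < (\<Sum>v\<in>V. (real (degree V E v))\<^sup>2)"
  shows "\<exists>x. share_bounded \<eta> V x \<and> 0 < sum x V \<and> (\<alpha> + \<epsilon> / 2) * (sum x V)\<^sup>2 \<le> adjacency_form E V x"
proof -
  define c where "c = sqrt (min (1 / 2) (2 * \<epsilon>))"
  obtain x where x: "\<forall>v\<in>V. 0 \<le> x v \<and> x v \<le> 3"
    and dense: "(\<alpha> + \<epsilon> / 2) * (sum x V)\<^sup>2 \<le> adjacency_form E V x"
    and "min (1 / 2) (2 * \<epsilon>) * (real (card V))\<^sup>2 \<le> (sum x V)\<^sup>2"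
    using dense_weighting_of_degree_squares[OF assms(1-3,6)] by blast
  then have "sqrt (min (1 / 2) (2 * \<epsilon>) * (real (card V))\<^sup>2) \<le> sqrt ((sum x V)\<^sup>2)"
    by (intro real_sqrt_le_mono)
  then have "c * card V \<le> sum x V" using x unfolding c_def by (simp add: real_sqrt_mult sum_nonneg)
  have "3 \<le> \<eta> * (c * card V)"
    using n_large \<open>0 < \<eta>\<close> \<open>0 < \<epsilon>\<close> unfolding c_def by (simp add: field_simps)
  also have "\<dots> \<le> \<eta> * sum x V" using \<open>c * card V \<le> sum x V\<close> \<open>0 < \<eta>\<close> by simp
  finally have "3 \<le> \<eta> * sum x V" .
  then have "share_bounded \<eta> V x" using x unfolding share_bounded_def by auto
  moreover have "0 < sum x V"
  proof -
    have "0 < \<eta> * sum x V" using \<open>3 \<le> \<eta> * sum x V\<close> by linarith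
    then show ?thesis using \<open>0 < \<eta>\<close> by (simp add: zero_less_mult_iff)
  qed
  ultimately show ?thesis using dense by blast
qed

theorem corollary2p15:
  fixes k :: nat and VF :: "'a set" and EF :: "'a \<Rightarrow> 'a \<Rightarrow> bool" and \<epsilon> :: real
  assumes "k \<ge> 2"
    and "simple_graph VF EF"
    and "chromatic_number VF EF = k + 1"
    and "\<epsilon> > 0"
  shows "\<exists>n0::nat. \<forall>(VG :: 'b set) EG n. simple_graph VG EG \<longrightarrow> free VF EF VG EG
           \<longrightarrow> card VG = n \<longrightarrow> n \<ge> n0 \<longrightarrow>
           (\<Sum>v\<in>VG. (real (degree VG EG v))\<^sup>2) \<le> (1 - 1 / real k + \<epsilon>)\<^sup>2 * (real n) ^ 3"
proof -
  define t where "t = card VF"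
  define \<eta> where "\<eta> = density_threshold (\<epsilon> / 2) k t"
  have "0 < \<eta>" unfolding \<eta>_def using assms(1,4) by (simp add: density_threshold_pos)
  have "1 / 2 \<le> 1 - 1 / real k" using assms(1) by (simp add: field_simps)
  have "colourable VF EF (Suc k)" using colourable_chromatic_number[OF assms(2)] assms(3) by simp
  show ?thesis
  proof (intro exI[of _ "nat \<lceil>3 / (\<eta> * sqrt (min (1 / 2) (2 * \<epsilon>)))\<rceil>"] allI impI)
    fix VG :: "'b set" and EG n
    assume G: "simple_graph VG EG" and "free VF EF VG EG" and "card VG = n"
      and "nat \<lceil>3 / (\<eta> * sqrt (min (1 / 2) (2 * \<epsilon>)))\<rceil> \<le> n"
    show "(\<Sum>v\<in>VG. (real (degree VG EG v))\<^sup>2) \<le> (1 - 1 / real k + \<epsilon>)\<^sup>2 * real n ^ 3"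
    proof (rule ccontr)
      assume "\<not> ?thesis"
      then obtain x where "share_bounded \<eta> VG x" "0 < sum x VG"
        and "(1 - 1 / real k + \<epsilon> / 2) * (sum x VG)\<^sup>2 \<le> adjacency_form EG VG x"
        using share_bounded_weighting_of_degree_squares[OF G \<open>1 / 2 \<le> 1 - 1 / real k\<close> assms(4)
            \<open>0 < \<eta>\<close>] \<open>card VG = n\<close> \<open>nat \<lceil>_\<rceil> \<le> n\<close> by force
      then have "has_complete_partite EG VG (Suc k) t"
        using simple_graphD[OF G] assms(1,4) unfolding \<eta>_def
        by (intro has_complete_partite_of_weighted_density) auto
      then have "contains_subgraph VF EF VG EG"
        using simple_graphD(1)[OF assms(2)] simple_graphD(1)[OF G] \<open>colourable VF EF (Suc k)\<close>
        unfolding t_def by (intro contains_subgraph_if_has_complete_partite)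
      then show False using \<open>free VF EF VG EG\<close> unfolding free_def by blast
    qed
  qed
qed

end
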